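(* Let $\mathcal{C}$ be an additive category with an automorphism $\Sigma$, let $n\ge 3$, and let $\mathscr{N}$ be a collection of $n$-$\Sigma$-sequences in $\mathcal{C}$ satisfying the axioms (N1)(b), (N2* ) and (N3). Then every $n$-$\Sigma$-sequence in $\mathscr{N}$ is exact.
   Context: $\mathcal{C}$ is an additive category, $\Sigma\colon\mathcal{C}\to\mathcal{C}$ an automorphism, and $n\ge 3$ an integer. An $n$-$\Sigma$-sequence $A_\bullet$ is a diagram $A_1\xrightarrow{\alpha_1}A_2\xrightarrow{\alpha_2}\cdots\xrightarrow{\alpha_{n-1}}A_n\xrightarrow{\alpha_n}\Sigma A_1$ in $\mathcal{C}$. It is exact if for every object $B$ of $\mathcal{C}$ the doubly infinite sequence of abelian groups $\cdots\to\mathrm{Hom}(B,\Sigma^{i-1}A_n)\xrightarrow{(\Sigma^{i-1}\alpha_n)_*}\mathrm{Hom}(B,\Sigma^iA_1)\xrightarrow{(\Sigma^i\alpha_1)_*}\mathrm{Hom}(B,\Sigma^iA_2)\to\cdots\xrightarrow{(\Sigma^i\alpha_{n-1})_*}\mathrm{Hom}(B,\Sigma^iA_n)\xrightarrow{(\Sigma^i\alpha_n)_*}\mathrm{Hom}(B,\Sigma^{i+1}A_1)\to\cdots$ ($i\in\mathbb{Z}$) is exact. The left rotation of $A_\bullet$ is $A_2\xrightarrow{\alpha_2}A_3\to\cdots\xrightarrow{\alpha_n}\Sigma A_1\xrightarrow{(-1)^n\Sigma\alpha_1}\Sigma A_2$. A morphism $A_\bullet\to B_\bullet$ of $n$-$\Sigma$-sequences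 (with $B_\bullet$ having maps $\beta_i$) is a tuple $(\varphi_1,\dots,\varphi_n)$ of morphisms $\varphi_i\colon A_i\to B_i$ with $\varphi_{i+1}\alpha_i=\beta_i\varphi_i$ for $1\le i\le n-1$ and $\Sigma\varphi_1\circ\alpha_n=\beta_n\circ\varphi_n$. Axioms for a collection $\mathscr{N}$ of $n$-$\Sigma$-sequences: (N1)(b): for every object $A$, the trivial sequence $A\xrightarrow{1}A\to0\to\cdots\to0\to\Sigma A$ belongs to $\mathscr{N}$. (N2* ): the left rotation of every sequence in $\mathscr{N}$ belongs to $\mathscr{N}$. (N3): given $A_\bullet,B_\bullet\in\mathscr{N}$ and morphisms $\varphi_1\colon A_1\to B_1$, $\varphi_2\colon A_2\to B_2$ with $\varphi_2\alpha_1=\beta_1\varphi_1$, there exist $\varphi_3,\dots,\varphi_n$ such that $(\varphi_1,\dots,\varphi_n)$ is a morphism of $n$-$\Sigma$-sequences. *)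

theory Defs
  imports Main
begin

record ('o, 'm) addcat =
  Ob   :: "'o set"
  Mor  :: "'m set"
  Dom  :: "'m \<Rightarrow> 'o"
  Cod  :: "'m \<Rightarrow> 'o"
  Comp :: "'m \<Rightarrow> 'm \<Rightarrow> 'm"   (* Comp g f = g \<circ> f *)
  Id   :: "'o \<Rightarrow> 'm"
  Add  :: "'m \<Rightarrow> 'm \<Rightarrow> 'm"
  Neg  :: "'m \<Rightarrow> 'm"
  Zero :: "'o \<Rightarrow> 'o \<Rightarrow> 'm"
  ZObj :: "'o"

definition Hom :: "('o, 'm) addcat \<Rightarrow> 'o \<Rightarrow> 'o \<Rightarrow> 'm set" where
  "Hom C A B = {f \<in> Mor C. Dom C f = A \<and> Cod C f = B}"

definition is_category :: "('o, 'm) addcat \<Rightarrow> bool" where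
  "is_category C \<longleftrightarrow>
     (\<forall>f \<in> Mor C. Dom C f \<in> Ob C \<and> Cod C f \<in> Ob C) \<and>
     (\<forall>A \<in> Ob C. Id C A \<in> Hom C A A) \<and>
     (\<forall>A B D f g. f \<in> Hom C A B \<longrightarrow> g \<in> Hom C B D \<longrightarrow> Comp C g f \<in> Hom C A D) \<and>
     (\<forall>A B f. f \<in> Hom C A B \<longrightarrow> Comp C (Id C B) f = f \<and> Comp C f (Id C A) = f) \<and>
     (\<forall>A B D E f g h. f \<in> Hom C A B \<longrightarrow> g \<in> Hom C B D \<longrightarrow> h \<in> Hom C D E \<longrightarrow>
        Comp C h (Comp C g f) = Comp C (Comp C h g) f)"

definition is_preadditive :: "('o, 'm) addcat \<Rightarrow> bool" where
  "is_preadditive C \<longleftrightarrow> is_category C \<and>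
     (\<forall>A \<in> Ob C. \<forall>B \<in> Ob C.
        Zero C A B \<in> Hom C A B \<and>
        (\<forall>f \<in> Hom C A B. \<forall>g \<in> Hom C A B. Add C f g \<in> Hom C A B) \<and>
        (\<forall>f \<in> Hom C A B. Neg C f \<in> Hom C A B) \<and>
        (\<forall>f \<in> Hom C A B. \<forall>g \<in> Hom C A B. \<forall>h \<in> Hom C A B.
            Add C (Add C f g) h = Add C f (Add C g h)) \<and>
        (\<forall>f \<in> Hom C A B. \<forall>g \<in> Hom C A B. Add C f g = Add C g f) \<and>
        (\<forall>f \<in> Hom C A B. Add C f (Zero C A B) = f) \<and>
        (\<forall>f \<in> Hom C A B. Add C f (Neg C f) = Zero C A B)) \<and>
     (\<forall>A B D f g h. f \<in> Hom C A B \<longrightarrow> g \<in> Hom C A B \<longrightarrow> h \<in> Hom C B D \<longrightarrow>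
        Comp C h (Add C f g) = Add C (Comp C h f) (Comp C h g)) \<and>
     (\<forall>A B D f g h. f \<in> Hom C B D \<longrightarrow> g \<in> Hom C B D \<longrightarrow> h \<in> Hom C A B \<longrightarrow>
        Comp C (Add C f g) h = Add C (Comp C f h) (Comp C g h))"

definition is_zero_object :: "('o, 'm) addcat \<Rightarrow> 'o \<Rightarrow> bool" where
  "is_zero_object C Z \<longleftrightarrow> Z \<in> Ob C \<and>
     (\<forall>A \<in> Ob C. (\<exists>!f. f \<in> Hom C A Z) \<and> (\<exists>!f. f \<in> Hom C Z A))"

definition additive_category :: "('o, 'm) addcat \<Rightarrow> bool" where
  "additive_category C \<longleftrightarrow> is_preadditive C \<and> is_zero_object C (ZObj C) \<and>
     (\<forall>A \<in> Ob C. \<forall>B \<in> Ob C. \<exists>P i1 i2 p1 p2.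
        P \<in> Ob C \<and> i1 \<in> Hom C A P \<and> i2 \<in> Hom C B P \<and> p1 \<in> Hom C P A \<and> p2 \<in> Hom C P B \<and>
        Comp C p1 i1 = Id C A \<and> Comp C p2 i2 = Id C B \<and>
        Comp C p1 i2 = Zero C B A \<and> Comp C p2 i1 = Zero C A B \<and>
        Add C (Comp C i1 p1) (Comp C i2 p2) = Id C P)"

definition automorphism :: "('o, 'm) addcat \<Rightarrow> ('o \<Rightarrow> 'o) \<Rightarrow> ('m \<Rightarrow> 'm) \<Rightarrow> bool" where
  "automorphism C So Sm \<longleftrightarrow>
     bij_betw So (Ob C) (Ob C) \<and> bij_betw Sm (Mor C) (Mor C) \<and>
     (\<forall>A B f. f \<in> Hom C A B \<longrightarrow> Sm f \<in> Hom C (So A) (So B)) \<and>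
     (\<forall>A \<in> Ob C. Sm (Id C A) = Id C (So A)) \<and>
     (\<forall>A B D f g. f \<in> Hom C A B \<longrightarrow> g \<in> Hom C B D \<longrightarrow> Sm (Comp C g f) = Comp C (Sm g) (Sm f)) \<and>
     (\<forall>A B f g. f \<in> Hom C A B \<longrightarrow> g \<in> Hom C A B \<longrightarrow> Sm (Add C f g) = Add C (Sm f) (Sm g))"

definition pow_o :: "('o, 'm) addcat \<Rightarrow> ('o \<Rightarrow> 'o) \<Rightarrow> int \<Rightarrow> 'o \<Rightarrow> 'o" where
  "pow_o C So i = (if 0 \<le> i then So ^^ nat i else inv_into (Ob C) So ^^ nat (- i))"

definition pow_m :: "('o, 'm) addcat \<Rightarrow> ('m \<Rightarrow> 'm) \<Rightarrow> int \<Rightarrow> 'm \<Rightarrow> 'm" where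
  "pow_m C Sm i = (if 0 \<le> i then Sm ^^ nat i else inv_into (Mor C) Sm ^^ nat (- i))"

text \<open>An n-\<Sigma>-sequence A_1 \<rightarrow> ... \<rightarrow> A_n \<rightarrow> \<Sigma>A_1 is a pair of lists (objects, maps),
  both of length n, indexed 0..n-1 (so A_k is the entry k-1).\<close>
type_synonym ('o, 'm) nseq = "'o list \<times> 'm list"

definition is_nseq :: "('o, 'm) addcat \<Rightarrow> ('o \<Rightarrow> 'o) \<Rightarrow> nat \<Rightarrow> ('o, 'm) nseq \<Rightarrow> bool" where
  "is_nseq C So n s \<longleftrightarrow> (case s of (A, \<alpha>) \<Rightarrow>
     length A = n \<and> length \<alpha> = n \<and> (\<forall>k < n. A ! k \<in> Ob C) \<and>
     (\<forall>k. k + 1 < n \<longrightarrow> \<alpha> ! k \<in> Hom C (A ! k) (A ! (k + 1))) \<and>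
     \<alpha> ! (n - 1) \<in> Hom C (A ! (n - 1)) (So (A ! 0)))"

definition exact_at :: "('o, 'm) addcat \<Rightarrow> 'o \<Rightarrow> 'm \<Rightarrow> 'm \<Rightarrow> bool" where
  "exact_at C B f g \<longleftrightarrow>
     {h \<in> Hom C B (Dom C g). Comp C g h = Zero C B (Cod C g)} = (\<lambda>k. Comp C f k) ` Hom C B (Dom C f)"

text \<open>Exactness of the doubly infinite sequence at every term \<Sigma>^i A_k, for every object B.\<close>
definition exact_nseq :: "('o, 'm) addcat \<Rightarrow> ('o \<Rightarrow> 'o) \<Rightarrow> ('m \<Rightarrow> 'm) \<Rightarrow> nat \<Rightarrow> ('o, 'm) nseq \<Rightarrow> bool" where
  "exact_nseq C So Sm n s \<longleftrightarrow> (case s of (A, \<alpha>) \<Rightarrow>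
     (\<forall>B \<in> Ob C. \<forall>i::int.
        exact_at C B (pow_m C Sm (i - 1) (\<alpha> ! (n - 1))) (pow_m C Sm i (\<alpha> ! 0)) \<and>
        (\<forall>k. 1 \<le> k \<and> k < n \<longrightarrow>
           exact_at C B (pow_m C Sm i (\<alpha> ! (k - 1))) (pow_m C Sm i (\<alpha> ! k)))))"

definition left_rotation :: "('o, 'm) addcat \<Rightarrow> ('o \<Rightarrow> 'o) \<Rightarrow> ('m \<Rightarrow> 'm) \<Rightarrow> nat \<Rightarrow> ('o, 'm) nseq \<Rightarrow> ('o, 'm) nseq" where
  "left_rotation C So Sm n s = (case s of (A, \<alpha>) \<Rightarrow>
     (tl A @ [So (A ! 0)],
      tl \<alpha> @ [if even n then Sm (\<alpha> ! 0) else Neg C (Sm (\<alpha> ! 0))]))"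

text \<open>Trivial sequence A --1--> A --> 0 --> ... --> 0 --> \<Sigma>A.\<close>
definition trivial_nseq :: "('o, 'm) addcat \<Rightarrow> ('o \<Rightarrow> 'o) \<Rightarrow> nat \<Rightarrow> 'o \<Rightarrow> ('o, 'm) nseq" where
  "trivial_nseq C So n A =
     ([A, A] @ replicate (n - 2) (ZObj C),
      [Id C A, Zero C A (ZObj C)] @ replicate (n - 3) (Zero C (ZObj C) (ZObj C))
        @ [Zero C (ZObj C) (So A)])"

definition nseq_morphism :: "('o, 'm) addcat \<Rightarrow> ('m \<Rightarrow> 'm) \<Rightarrow> nat \<Rightarrow> ('o, 'm) nseq \<Rightarrow> ('o, 'm) nseq \<Rightarrow> 'm list \<Rightarrow> bool" where
  "nseq_morphism C Sm n s t \<phi> \<longleftrightarrow> (case s of (A, \<alpha>) \<Rightarrow> case t of (B, \<beta>) \<Rightarrow>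
     length \<phi> = n \<and> (\<forall>k < n. \<phi> ! k \<in> Hom C (A ! k) (B ! k)) \<and>
     (\<forall>k. k + 1 < n \<longrightarrow> Comp C (\<phi> ! (k + 1)) (\<alpha> ! k) = Comp C (\<beta> ! k) (\<phi> ! k)) \<and>
     Comp C (Sm (\<phi> ! 0)) (\<alpha> ! (n - 1)) = Comp C (\<beta> ! (n - 1)) (\<phi> ! (n - 1)))"

definition N1b :: "('o, 'm) addcat \<Rightarrow> ('o \<Rightarrow> 'o) \<Rightarrow> nat \<Rightarrow> ('o, 'm) nseq set \<Rightarrow> bool" where
  "N1b C So n N \<longleftrightarrow> (\<forall>A \<in> Ob C. trivial_nseq C So n A \<in> N)"

definition N2star :: "('o, 'm) addcat \<Rightarrow> ('o \<Rightarrow> 'o) \<Rightarrow> ('m \<Rightarrow> 'm) \<Rightarrow> nat \<Rightarrow> ('o, 'm) nseq set \<Rightarrow> bool" where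
  "N2star C So Sm n N \<longleftrightarrow> (\<forall>s \<in> N. left_rotation C So Sm n s \<in> N)"

definition N3 :: "('o, 'm) addcat \<Rightarrow> ('m \<Rightarrow> 'm) \<Rightarrow> nat \<Rightarrow> ('o, 'm) nseq set \<Rightarrow> bool" where
  "N3 C Sm n N \<longleftrightarrow> (\<forall>A \<alpha> B \<beta> \<phi>1 \<phi>2. (A, \<alpha>) \<in> N \<longrightarrow> (B, \<beta>) \<in> N \<longrightarrow>
     \<phi>1 \<in> Hom C (A ! 0) (B ! 0) \<longrightarrow> \<phi>2 \<in> Hom C (A ! 1) (B ! 1) \<longrightarrow>
     Comp C \<phi>2 (\<alpha> ! 0) = Comp C (\<beta> ! 0) \<phi>1 \<longrightarrow>
     (\<exists>\<phi>. nseq_morphism C Sm n (A, \<alpha>) (B, \<beta>) \<phi> \<and> \<phi> ! 0 = \<phi>1 \<and> \<phi> ! 1 = \<phi>2))"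

end

theory Submission
  imports Defs
begin

text \<open>By (N2*), every position of a sequence in \<open>\<N>\<close> can be rotated to the front, up to a sign on
  the shifted map, and shifting by \<open>\<Sigma>\<close> preserves exactness; so it suffices to show that
  \<open>Hom(B, A\<^sub>1) \<rightarrow> Hom(B, A\<^sub>2) \<rightarrow> Hom(B, A\<^sub>3)\<close> is exact. Comparing the trivial
  sequence on \<open>A\<^sub>1\<close> with \<open>A\<^sub>\<bullet>\<close> by (N3) gives \<open>\<alpha>\<^sub>2\<alpha>\<^sub>1 = 0\<close>. Conversely, if
  \<open>\<alpha>\<^sub>2h = 0\<close> then (N3) extends \<open>(h, 0)\<close> to a morphism from the rotated trivial sequence on
  \<open>B\<close> to the rotated \<open>A\<^sub>\<bullet>\<close>; its last square says that its last component factors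
  \<open>\<Sigma>h\<close> through \<open>\<Sigma>\<alpha>\<^sub>1\<close>, and applying \<open>\<Sigma>\<^sup>-\<^sup>1\<close> factors \<open>h\<close> through \<open>\<alpha>\<^sub>1\<close>.\<close>

lemma exact_at_Hom:
  assumes "f \<in> Hom C X Y" and "g \<in> Hom C Y Z"
  shows "exact_at C B f g \<longleftrightarrow>
    {h \<in> Hom C B Y. Comp C g h = Zero C B Z} = (\<lambda>k. Comp C f k) ` Hom C B X"
proof -
  have "Dom C f = X" "Dom C g = Y" "Cod C g = Z"
    using assms unfolding Hom_def by auto
  then show ?thesis
    unfolding exact_at_def by simp
qed

definition exact_pair :: "('o, 'm) addcat \<Rightarrow> 'm \<Rightarrow> 'm \<Rightarrow> bool" where
  "exact_pair C f g \<longleftrightarrow>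
    (\<exists>X Y Z. f \<in> Hom C X Y \<and> g \<in> Hom C Y Z \<and> (\<forall>B \<in> Ob C. exact_at C B f g))"

lemma exact_pair_iff:
  assumes "g \<in> Hom C Y Z"
  shows "exact_pair C f g \<longleftrightarrow> (\<exists>X. f \<in> Hom C X Y \<and> (\<forall>B \<in> Ob C. exact_at C B f g))"
  using assms unfolding exact_pair_def Hom_def by auto

lemma nseq_morphismD:
  assumes "nseq_morphism C Sm n (A, \<alpha>) (B, \<beta>) \<phi>"
  shows "k < n \<Longrightarrow> \<phi> ! k \<in> Hom C (A ! k) (B ! k)"
    and "k + 1 < n \<Longrightarrow> Comp C (\<phi> ! (k + 1)) (\<alpha> ! k) = Comp C (\<beta> ! k) (\<phi> ! k)"
    and "Comp C (Sm (\<phi> ! 0)) (\<alpha> ! (n - 1)) = Comp C (\<beta> ! (n - 1)) (\<phi> ! (n - 1))"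
  using assms unfolding nseq_morphism_def by simp_all

locale preadditive_cat =
  fixes C :: "('o, 'm) addcat"
  assumes preadditive: "is_preadditive C"
begin

lemma category: "is_category C"
  using preadditive unfolding is_preadditive_def by blast

lemma Hom_Ob: "f \<in> Hom C A B \<Longrightarrow> A \<in> Ob C \<and> B \<in> Ob C"
  using category unfolding is_category_def Hom_def by blast

lemma comp_in_Hom: "f \<in> Hom C A B \<Longrightarrow> g \<in> Hom C B D \<Longrightarrow> Comp C g f \<in> Hom C A D"
  using category unfolding is_category_def by blast

lemma Id_in_Hom: "A \<in> Ob C \<Longrightarrow> Id C A \<in> Hom C A A"
  using category unfolding is_category_def by blast

lemma comp_Id_right: "f \<in> Hom C A B \<Longrightarrow> Comp C f (Id C A) = f"
  using category unfolding is_category_def by blast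

lemma comp_assoc:
  "f \<in> Hom C A B \<Longrightarrow> g \<in> Hom C B D \<Longrightarrow> h \<in> Hom C D E \<Longrightarrow>
    Comp C h (Comp C g f) = Comp C (Comp C h g) f"
  using category unfolding is_category_def by blast

lemma Hom_abelian_group:
  assumes "A \<in> Ob C" "B \<in> Ob C"
  shows "Zero C A B \<in> Hom C A B"
    and "f \<in> Hom C A B \<Longrightarrow> Neg C f \<in> Hom C A B"
    and "f \<in> Hom C A B \<Longrightarrow> g \<in> Hom C A B \<Longrightarrow> h \<in> Hom C A B \<Longrightarrow>
      Add C (Add C f g) h = Add C f (Add C g h)"
    and "f \<in> Hom C A B \<Longrightarrow> g \<in> Hom C A B \<Longrightarrow> Add C f g = Add C g f"
    and "f \<in> Hom C A B \<Longrightarrow> Add C f (Zero C A B) = f"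
    and "f \<in> Hom C A B \<Longrightarrow> Add C f (Neg C f) = Zero C A B"
  using bspec[OF bspec[OF conjunct1[OF conjunct2[OF preadditive[unfolded is_preadditive_def]]]
        assms(1)] assms(2)]
  by blast+

lemma Zero_in_Hom: "A \<in> Ob C \<Longrightarrow> B \<in> Ob C \<Longrightarrow> Zero C A B \<in> Hom C A B"
  by (rule Hom_abelian_group(1))

lemma Neg_in_Hom: "f \<in> Hom C A B \<Longrightarrow> Neg C f \<in> Hom C A B"
  using Hom_abelian_group(2) Hom_Ob by blast

lemma Add_assoc:
  "f \<in> Hom C A B \<Longrightarrow> g \<in> Hom C A B \<Longrightarrow> h \<in> Hom C A B \<Longrightarrow>
    Add C (Add C f g) h = Add C f (Add C g h)"
  using Hom_abelian_group(3) Hom_Ob by blast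

lemma Add_commute: "f \<in> Hom C A B \<Longrightarrow> g \<in> Hom C A B \<Longrightarrow> Add C f g = Add C g f"
  using Hom_abelian_group(4) Hom_Ob by blast

lemma Add_Zero: "f \<in> Hom C A B \<Longrightarrow> Add C f (Zero C A B) = f"
  using Hom_abelian_group(5) Hom_Ob by blast

lemma Add_Neg: "f \<in> Hom C A B \<Longrightarrow> Add C f (Neg C f) = Zero C A B"
  using Hom_abelian_group(6) Hom_Ob by blast

lemma comp_Add_left:
  "f \<in> Hom C A B \<Longrightarrow> g \<in> Hom C A B \<Longrightarrow> h \<in> Hom C B D \<Longrightarrow>
    Comp C h (Add C f g) = Add C (Comp C h f) (Comp C h g)"
  using preadditive unfolding is_preadditive_def by blast

lemma comp_Add_right:
  "f \<in> Hom C B D \<Longrightarrow> g \<in> Hom C B D \<Longrightarrow> h \<in> Hom C A B \<Longrightarrow>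
    Comp C (Add C f g) h = Add C (Comp C f h) (Comp C g h)"
  using preadditive unfolding is_preadditive_def by blast

lemma Add_left_cancel:
  assumes a: "a \<in> Hom C A B" and b: "b \<in> Hom C A B" and c: "c \<in> Hom C A B"
    and eq: "Add C a b = Add C a c"
  shows "b = c"
proof -
  have na: "Neg C a \<in> Hom C A B"
    using a by (rule Neg_in_Hom)
  have Zero_Add: "Add C (Zero C A B) x = x" if "x \<in> Hom C A B" for x
    using Add_commute[OF that Zero_in_Hom] Add_Zero[OF that] Hom_Ob[OF a] by simp
  have "b = Add C (Add C (Neg C a) a) b"
    using Add_commute[OF na a] Add_Neg[OF a] Zero_Add[OF b] by simp
  also have "\<dots> = Add C (Neg C a) (Add C a c)"
    using Add_assoc[OF na a b] eq by simp
  also have "\<dots> = c"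
    using Add_assoc[OF na a c] Add_commute[OF na a] Add_Neg[OF a] Zero_Add[OF c] by simp
  finally show ?thesis .
qed

lemma Neg_unique:
  assumes "a \<in> Hom C A B" "b \<in> Hom C A B" "Add C a b = Zero C A B"
  shows "b = Neg C a"
  using Add_left_cancel[OF assms(1,2) Neg_in_Hom[OF assms(1)]] assms(3) Add_Neg[OF assms(1)]
  by simp

lemma Neg_Neg: "a \<in> Hom C A B \<Longrightarrow> Neg C (Neg C a) = a"
  using Neg_unique[OF Neg_in_Hom, of a A B a] Add_commute[OF Neg_in_Hom] Add_Neg by simp

lemma Add_self_eq_Zero: "a \<in> Hom C A B \<Longrightarrow> Add C a a = a \<Longrightarrow> a = Zero C A B"
  using Add_left_cancel[of a A B a "Zero C A B"] Add_Zero Zero_in_Hom Hom_Ob by simp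

lemma Neg_eq_Zero_iff:
  assumes a: "a \<in> Hom C A B"
  shows "Neg C a = Zero C A B \<longleftrightarrow> a = Zero C A B"
proof -
  have z: "Zero C A B \<in> Hom C A B"
    using Zero_in_Hom Hom_Ob[OF a] by blast
  have "Neg C (Zero C A B) = Zero C A B"
    using Neg_unique[OF z z] Add_Zero[OF z] by simp
  then show ?thesis
    using Neg_Neg[OF a] by metis
qed

lemma comp_Zero_right:
  assumes g: "g \<in> Hom C B D" and A: "A \<in> Ob C"
  shows "Comp C g (Zero C A B) = Zero C A D"
proof -
  have z: "Zero C A B \<in> Hom C A B"
    using Zero_in_Hom A Hom_Ob[OF g] by blast
  have "Comp C g (Zero C A B) = Add C (Comp C g (Zero C A B)) (Comp C g (Zero C A B))"
    using comp_Add_left[OF z z g] Add_Zero[OF z] by simp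
  then show ?thesis
    using Add_self_eq_Zero comp_in_Hom[OF z g] by metis
qed

lemma comp_Zero_left:
  assumes f: "f \<in> Hom C A B" and D: "D \<in> Ob C"
  shows "Comp C (Zero C B D) f = Zero C A D"
proof -
  have z: "Zero C B D \<in> Hom C B D"
    using Zero_in_Hom D Hom_Ob[OF f] by blast
  have "Comp C (Zero C B D) f = Add C (Comp C (Zero C B D) f) (Comp C (Zero C B D) f)"
    using comp_Add_right[OF z z f] Add_Zero[OF z] by simp
  then show ?thesis
    using Add_self_eq_Zero comp_in_Hom[OF f z] by metis
qed

lemma comp_Neg_left:
  assumes g: "g \<in> Hom C B D" and f: "f \<in> Hom C A B"
  shows "Comp C (Neg C g) f = Neg C (Comp C g f)"
proof (rule Neg_unique)
  show "Add C (Comp C g f) (Comp C (Neg C g) f) = Zero C A D"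
    using comp_Add_right[OF g Neg_in_Hom[OF g] f] Add_Neg[OF g] comp_Zero_left[OF f] Hom_Ob[OF g]
    by simp
qed (use comp_in_Hom Neg_in_Hom f g in blast)+

lemma comp_Neg_right:
  assumes g: "g \<in> Hom C B D" and f: "f \<in> Hom C A B"
  shows "Comp C g (Neg C f) = Neg C (Comp C g f)"
proof (rule Neg_unique)
  show "Add C (Comp C g f) (Comp C g (Neg C f)) = Zero C A D"
    using comp_Add_left[OF f Neg_in_Hom[OF f] g] Add_Neg[OF f] comp_Zero_right[OF g] Hom_Ob[OF f]
    by simp
qed (use comp_in_Hom Neg_in_Hom f g in blast)+

lemma comp_Neg_Id_cancel:
  assumes h: "h \<in> Hom C X Y" and g: "g \<in> Hom C W Y" and p: "p \<in> Hom C X W"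
    and eq: "Comp C h (Neg C (Id C X)) = Comp C (Neg C g) p"
  shows "h = Comp C g p"
proof -
  have X: "X \<in> Ob C"
    using Hom_Ob[OF h] by blast
  have "Neg C h = Neg C (Comp C g p)"
    using eq comp_Neg_right[OF h Id_in_Hom[OF X]] comp_Id_right[OF h] comp_Neg_left[OF g p] by simp
  then show ?thesis
    using Neg_Neg[OF h] Neg_Neg[OF comp_in_Hom[OF p g]] by metis
qed

lemma exact_at_Neg_right:
  assumes f: "f \<in> Hom C X Y" and g: "g \<in> Hom C Y Z"
  shows "exact_at C B f (Neg C g) \<longleftrightarrow> exact_at C B f g"
proof -
  have "Comp C (Neg C g) h = Zero C B Z \<longleftrightarrow> Comp C g h = Zero C B Z" if "h \<in> Hom C B Y" for h
    using comp_Neg_left[OF g that] Neg_eq_Zero_iff[OF comp_in_Hom[OF that g]] by simp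
  then have "{h \<in> Hom C B Y. Comp C (Neg C g) h = Zero C B Z} = {h \<in> Hom C B Y. Comp C g h = Zero C B Z}"
    by blast
  then show ?thesis
    using exact_at_Hom[OF f g] exact_at_Hom[OF f Neg_in_Hom[OF g]] by simp
qed

lemma exact_pair_Neg_right_iff:
  assumes g: "g \<in> Hom C Y Z"
  shows "exact_pair C f (Neg C g) \<longleftrightarrow> exact_pair C f g"
  unfolding exact_pair_iff[OF g] exact_pair_iff[OF Neg_in_Hom[OF g]]
  using exact_at_Neg_right[OF _ g] by blast

end

locale preadditive_automorphism = preadditive_cat +
  fixes So :: "'o \<Rightarrow> 'o" and Sm :: "'m \<Rightarrow> 'm"
  assumes automorphism: "automorphism C So Sm"
begin

abbreviation Sm_inv :: "'m \<Rightarrow> 'm" where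
  "Sm_inv \<equiv> inv_into (Mor C) Sm"

lemma Sm_Hom: "f \<in> Hom C A B \<Longrightarrow> Sm f \<in> Hom C (So A) (So B)"
  using automorphism unfolding automorphism_def by blast

lemma Sm_comp: "f \<in> Hom C A B \<Longrightarrow> g \<in> Hom C B D \<Longrightarrow> Sm (Comp C g f) = Comp C (Sm g) (Sm f)"
  using automorphism unfolding automorphism_def by blast

lemma Sm_Add: "f \<in> Hom C A B \<Longrightarrow> g \<in> Hom C A B \<Longrightarrow> Sm (Add C f g) = Add C (Sm f) (Sm g)"
  using automorphism unfolding automorphism_def by blast

lemma Sm_Id: "A \<in> Ob C \<Longrightarrow> Sm (Id C A) = Id C (So A)"
  using automorphism unfolding automorphism_def by blast

lemma So_bij: "bij_betw So (Ob C) (Ob C)"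
  using automorphism unfolding automorphism_def by blast

lemma Sm_bij: "bij_betw Sm (Mor C) (Mor C)"
  using automorphism unfolding automorphism_def by blast

lemma So_Ob: "A \<in> Ob C \<Longrightarrow> So A \<in> Ob C"
  using So_bij bij_betwE by blast

lemma Ob_So_image: "B \<in> Ob C \<Longrightarrow> \<exists>A \<in> Ob C. B = So A"
  using So_bij unfolding bij_betw_def by blast

lemma Sm_Sm_inv: "f \<in> Mor C \<Longrightarrow> Sm (Sm_inv f) = f"
  using Sm_bij by (simp add: bij_betw_def f_inv_into_f)

lemma Sm_inv_Sm: "f \<in> Mor C \<Longrightarrow> Sm_inv (Sm f) = f"
  using Sm_bij by (simp add: bij_betw_def inv_into_f_f)

lemma Sm_Zero:
  assumes "A \<in> Ob C" "B \<in> Ob C"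
  shows "Sm (Zero C A B) = Zero C (So A) (So B)"
proof -
  have z: "Zero C A B \<in> Hom C A B"
    using Zero_in_Hom assms .
  have "Sm (Zero C A B) = Add C (Sm (Zero C A B)) (Sm (Zero C A B))"
    using Sm_Add[OF z z] Add_Zero[OF z] by simp
  then show ?thesis
    using Add_self_eq_Zero Sm_Hom[OF z] by metis
qed

lemma Sm_inv_Hom:
  assumes f: "f \<in> Hom C (So A) (So B)" and A: "A \<in> Ob C" and B: "B \<in> Ob C"
  shows "Sm_inv f \<in> Hom C A B"
proof -
  have f': "Sm_inv f \<in> Mor C"
    using f Sm_bij unfolding Hom_def bij_betw_def by (simp add: inv_into_into)
  then have "Sm_inv f \<in> Hom C (Dom C (Sm_inv f)) (Cod C (Sm_inv f))"
    and Ob: "Dom C (Sm_inv f) \<in> Ob C" "Cod C (Sm_inv f) \<in> Ob C"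
    using category unfolding is_category_def Hom_def by auto
  moreover have "f \<in> Hom C (So (Dom C (Sm_inv f))) (So (Cod C (Sm_inv f)))"
    using Sm_Hom[OF calculation(1)] Sm_Sm_inv f unfolding Hom_def by auto
  then have "So (Dom C (Sm_inv f)) = So A" "So (Cod C (Sm_inv f)) = So B"
    using f unfolding Hom_def by auto
  then have "Dom C (Sm_inv f) = A" "Cod C (Sm_inv f) = B"
    using So_bij Ob A B unfolding bij_betw_def inj_on_def by blast+
  ultimately show ?thesis
    by simp
qed

lemma Sm_image_Hom:
  assumes "A \<in> Ob C" "B \<in> Ob C"
  shows "Sm ` Hom C A B = Hom C (So A) (So B)"
proof
  show "Sm ` Hom C A B \<subseteq> Hom C (So A) (So B)"
    using Sm_Hom by blast
  show "Hom C (So A) (So B) \<subseteq> Sm ` Hom C A B"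
  proof
    fix f assume f: "f \<in> Hom C (So A) (So B)"
    then have "f = Sm (Sm_inv f)"
      using Sm_Sm_inv unfolding Hom_def by simp
    then show "f \<in> Sm ` Hom C A B"
      using Sm_inv_Hom[OF f assms] by blast
  qed
qed

lemma factorization_of_Sm:
  assumes f: "f \<in> Hom C A B" and h: "h \<in> Hom C D B" and p: "p \<in> Hom C (So D) (So A)"
    and eq: "Sm h = Comp C (Sm f) p"
  shows "h \<in> (\<lambda>k. Comp C f k) ` Hom C D A"
proof -
  have k: "Sm_inv p \<in> Hom C D A"
    using Sm_inv_Hom[OF p] Hom_Ob[OF h] Hom_Ob[OF f] by blast
  have "Sm (Comp C f (Sm_inv p)) = Sm h"
    using Sm_comp[OF k f] Sm_Sm_inv p eq unfolding Hom_def by auto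
  then have "Comp C f (Sm_inv p) = h"
    using Sm_inv_Sm comp_in_Hom[OF k f] h unfolding Hom_def by (metis (no_types, lifting) mem_Collect_eq)
  then show ?thesis
    using k by blast
qed

lemma exact_at_Sm_iff:
  assumes f: "f \<in> Hom C X Y" and g: "g \<in> Hom C Y Z" and B: "B \<in> Ob C"
  shows "exact_at C (So B) (Sm f) (Sm g) \<longleftrightarrow> exact_at C B f g"
proof -
  have X: "X \<in> Ob C" and Y: "Y \<in> Ob C" and Z: "Z \<in> Ob C"
    using Hom_Ob[OF f] Hom_Ob[OF g] by auto
  define ker where "ker = {h \<in> Hom C B Y. Comp C g h = Zero C B Z}"
  define img where "img = (\<lambda>k. Comp C f k) ` Hom C B X"
  have "Comp C (Sm g) (Sm h) = Zero C (So B) (So Z) \<longleftrightarrow> Comp C g h = Zero C B Z"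
    if h: "h \<in> Hom C B Y" for h
  proof -
    have "Comp C g h \<in> Mor C" "Zero C B Z \<in> Mor C"
      using comp_in_Hom[OF h g] Zero_in_Hom[OF B Z] unfolding Hom_def by auto
    then show ?thesis
      using Sm_comp[OF h g] Sm_Zero[OF B Z] Sm_inv_Sm by metis
  qed
  then have ker': "{h \<in> Hom C (So B) (So Y). Comp C (Sm g) h = Zero C (So B) (So Z)} = Sm ` ker"
    unfolding ker_def Sm_image_Hom[OF B Y, symmetric] by auto
  have img': "(\<lambda>k. Comp C (Sm f) k) ` Hom C (So B) (So X) = Sm ` img"
    unfolding img_def Sm_image_Hom[OF B X, symmetric] image_image
    using Sm_comp[OF _ f] by (intro image_cong) auto
  have "ker \<subseteq> Mor C" "img \<subseteq> Mor C"
    unfolding ker_def img_def using comp_in_Hom[OF _ f] unfolding Hom_def by auto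
  then have "Sm ` ker = Sm ` img \<longleftrightarrow> ker = img"
    using Sm_bij inj_on_image_eq_iff[of Sm "Mor C" ker img] unfolding bij_betw_def by blast
  then show ?thesis
    unfolding exact_at_Hom[OF f g] exact_at_Hom[OF Sm_Hom[OF f] Sm_Hom[OF g]] ker' img'
    by (simp add: ker_def img_def)
qed

lemma exact_pair_Sm:
  assumes "exact_pair C f g"
  shows "exact_pair C (Sm f) (Sm g)"
proof -
  obtain X Y Z where f: "f \<in> Hom C X Y" and g: "g \<in> Hom C Y Z"
    and exact: "\<forall>B \<in> Ob C. exact_at C B f g"
    using assms unfolding exact_pair_def by blast
  have "exact_at C B (Sm f) (Sm g)" if "B \<in> Ob C" for B
    using Ob_So_image[OF that] exact exact_at_Sm_iff[OF f g] by blast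
  then show ?thesis
    unfolding exact_pair_def using Sm_Hom[OF f] Sm_Hom[OF g] by blast
qed

lemma exact_pair_Sm_inv:
  assumes "exact_pair C f g"
  shows "exact_pair C (Sm_inv f) (Sm_inv g)"
proof -
  obtain X Y Z where f: "f \<in> Hom C X Y" and g: "g \<in> Hom C Y Z"
    and exact: "\<forall>B \<in> Ob C. exact_at C B f g"
    using assms unfolding exact_pair_def by blast
  obtain X' Y' Z' where "X' \<in> Ob C" "Y' \<in> Ob C" "Z' \<in> Ob C" "X = So X'" "Y = So Y'" "Z = So Z'"
    using Ob_So_image Hom_Ob[OF f] Hom_Ob[OF g] by metis
  then have f': "Sm_inv f \<in> Hom C X' Y'" and g': "Sm_inv g \<in> Hom C Y' Z'"
    using Sm_inv_Hom f g by auto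
  have "Sm (Sm_inv f) = f" "Sm (Sm_inv g) = g"
    using f g Sm_Sm_inv unfolding Hom_def by auto
  then have "exact_at C B (Sm_inv f) (Sm_inv g)" if "B \<in> Ob C" for B
    using exact So_Ob[OF that] exact_at_Sm_iff[OF f' g' that] by simp
  then show ?thesis
    unfolding exact_pair_def using f' g' by blast
qed

lemma exact_pair_pow_m:
  assumes "exact_pair C f g"
  shows "exact_pair C (pow_m C Sm i f) (pow_m C Sm i g)"
proof -
  have "exact_pair C ((Sm ^^ k) f) ((Sm ^^ k) g)" for k
    by (induction k) (simp_all add: assms exact_pair_Sm)
  moreover have "exact_pair C ((Sm_inv ^^ k) f) ((Sm_inv ^^ k) g)" for k
    by (induction k) (simp_all add: assms exact_pair_Sm_inv)
  ultimately show ?thesis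
    unfolding pow_m_def by simp
qed

lemma pow_m_Sm:
  assumes f: "f \<in> Mor C"
  shows "pow_m C Sm i (Sm f) = pow_m C Sm (i + 1) f"
proof (cases "0 \<le> i")
  case True
  then show ?thesis
    unfolding pow_m_def by (simp add: nat_add_distrib funpow_Suc_right del: funpow.simps)
next
  case False
  then obtain m where m: "nat (- i) = Suc m"
    by (metis gr0_implies_Suc neg_0_less_iff_less not_le zero_less_nat_eq)
  have "(Sm_inv ^^ Suc m) (Sm f) = (Sm_inv ^^ m) f"
    using Sm_inv_Sm[OF f] by (simp add: funpow_Suc_right del: funpow.simps)
  moreover have "nat (- (i + 1)) = m"
    using m by simp
  ultimately show ?thesis
    using False m unfolding pow_m_def by (cases "0 \<le> i + 1") auto
qed

end

locale nseq_axioms =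
  fixes C :: "('o, 'm) addcat" and So :: "'o \<Rightarrow> 'o" and Sm :: "'m \<Rightarrow> 'm"
    and n :: nat and N :: "('o, 'm) nseq set"
  assumes additive: "additive_category C"
    and automorphism: "automorphism C So Sm"
    and n_ge_3: "3 \<le> n"
    and N_nseq: "\<forall>s \<in> N. is_nseq C So n s"
    and N1b: "N1b C So n N"
    and N2star: "N2star C So Sm n N"
    and N3: "N3 C Sm n N"
begin

sublocale preadditive_automorphism C So Sm
  using additive automorphism
  by unfold_locales (simp_all add: additive_category_def)

lemma ZObj_Ob: "ZObj C \<in> Ob C"
  using additive unfolding additive_category_def is_zero_object_def by blast

abbreviation rot :: "('o, 'm) nseq \<Rightarrow> ('o, 'm) nseq" where
  "rot \<equiv> left_rotation C So Sm n"

abbreviation rotation_sign :: "'m \<Rightarrow> 'm" where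
  "rotation_sign f \<equiv> if even n then f else Neg C f"

lemma N_length:
  assumes "(A, \<alpha>) \<in> N"
  shows "length A = n" and "length \<alpha> = n"
  using assms N_nseq unfolding is_nseq_def by auto

lemma N_first_maps:
  assumes "(A, \<alpha>) \<in> N"
  shows "\<alpha> ! 0 \<in> Hom C (A ! 0) (A ! 1)" and "\<alpha> ! 1 \<in> Hom C (A ! 1) (A ! 2)"
proof -
  have "\<forall>k. k + 1 < n \<longrightarrow> \<alpha> ! k \<in> Hom C (A ! k) (A ! (k + 1))"
    using assms N_nseq unfolding is_nseq_def by auto
  then show "\<alpha> ! 0 \<in> Hom C (A ! 0) (A ! 1)" "\<alpha> ! 1 \<in> Hom C (A ! 1) (A ! 2)"
    using n_ge_3 by (auto dest: spec[of _ 0] spec[of _ 1] simp: numeral_2_eq_2)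
qed

lemma rotations_in_N: "s \<in> N \<Longrightarrow> (rot ^^ j) s \<in> N"
  by (induction j) (use N2star in \<open>auto simp: N2star_def\<close>)

lemma snd_rotations:
  assumes "length \<alpha> = n" and "j \<le> n"
  shows "snd ((rot ^^ j) (A, \<alpha>)) = drop j \<alpha> @ map (\<lambda>k. rotation_sign (Sm (\<alpha> ! k))) [0..<j]"
  using assms(2)
proof (induction j)
  case 0
  then show ?case by simp
next
  case (Suc j)
  obtain A' \<alpha>' where rot_j: "(rot ^^ j) (A, \<alpha>) = (A', \<alpha>')"
    by fastforce
  have j: "j < length \<alpha>"
    using Suc.prems assms(1) by simp
  have \<alpha>': "\<alpha>' = drop j \<alpha> @ map (\<lambda>k. rotation_sign (Sm (\<alpha> ! k))) [0..<j]"
    using Suc rot_j by simp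
  have "snd ((rot ^^ Suc j) (A, \<alpha>)) = snd (rot (A', \<alpha>'))"
    using rot_j by simp
  also have "\<dots> = tl \<alpha>' @ [rotation_sign (Sm (\<alpha>' ! 0))]"
    by (simp add: left_rotation_def)
  also have "\<dots> = drop (Suc j) \<alpha> @ map (\<lambda>k. rotation_sign (Sm (\<alpha> ! k))) [0..<Suc j]"
    using \<alpha>' j by (simp add: tl_append2 tl_drop drop_Suc nth_append)
  finally show ?case .
qed

lemma first_maps_rotations:
  assumes "(A, \<alpha>) \<in> N" and "j < n"
  shows "snd ((rot ^^ j) (A, \<alpha>)) ! 0 = \<alpha> ! j"
    and "snd ((rot ^^ j) (A, \<alpha>)) ! 1 =
      (if j + 1 < n then \<alpha> ! (j + 1) else rotation_sign (Sm (\<alpha> ! 0)))"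
  using assms snd_rotations[of \<alpha> j A] N_length[OF assms(1)] n_ge_3 by (auto simp: nth_append)

lemma nth_rotated_trivial_nseq:
  assumes "rot (trivial_nseq C So n B) = (TA, T\<alpha>)"
  shows "TA ! 0 = B" "TA ! 1 = ZObj C" "TA ! (n - 1) = So B"
    and "T\<alpha> ! 0 = Zero C B (ZObj C)" "T\<alpha> ! (n - 1) = rotation_sign (Sm (Id C B))"
  using assms n_ge_3 unfolding trivial_nseq_def left_rotation_def by (auto simp: nth_append nth_tl)

lemma nth_rotated_nseq:
  assumes "length A = n" "length \<alpha> = n" and "rot (A, \<alpha>) = (SA, S\<alpha>)"
  shows "SA ! 0 = A ! 1" "SA ! 1 = A ! 2" "SA ! (n - 1) = So (A ! 0)"
    and "S\<alpha> ! 0 = \<alpha> ! 1" "S\<alpha> ! (n - 1) = rotation_sign (Sm (\<alpha> ! 0))"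
  using assms n_ge_3 unfolding left_rotation_def by (auto simp: nth_append nth_tl numeral_2_eq_2)

lemma comp_first_maps_Zero:
  assumes s: "(A, \<alpha>) \<in> N"
  shows "Comp C (\<alpha> ! 1) (\<alpha> ! 0) = Zero C (A ! 0) (A ! 2)"
proof -
  have \<alpha>0: "\<alpha> ! 0 \<in> Hom C (A ! 0) (A ! 1)"
    using N_first_maps[OF s] by blast
  have A0: "A ! 0 \<in> Ob C"
    using Hom_Ob[OF \<alpha>0] by blast
  obtain TA T\<alpha> where T: "trivial_nseq C So n (A ! 0) = (TA, T\<alpha>)"
    by fastforce
  have "(TA, T\<alpha>) \<in> N"
    using N1b A0 T unfolding N1b_def by metis
  moreover have TA: "TA ! 0 = A ! 0" "TA ! 1 = A ! 0" "TA ! 2 = ZObj C"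
    and T\<alpha>: "T\<alpha> ! 0 = Id C (A ! 0)" "T\<alpha> ! 1 = Zero C (A ! 0) (ZObj C)"
    using T n_ge_3 unfolding trivial_nseq_def by (auto simp: nth_append)
  moreover have "Comp C (\<alpha> ! 0) (T\<alpha> ! 0) = Comp C (\<alpha> ! 0) (Id C (A ! 0))"
    using T\<alpha> by simp
  ultimately obtain \<phi> where \<phi>: "nseq_morphism C Sm n (TA, T\<alpha>) (A, \<alpha>) \<phi>" "\<phi> ! 1 = \<alpha> ! 0"
    using N3 s Id_in_Hom[OF A0] \<alpha>0 unfolding N3_def by metis
  have "\<phi> ! 2 \<in> Hom C (ZObj C) (A ! 2)"
    using nseq_morphismD(1)[OF \<phi>(1), of 2] n_ge_3 TA by simp
  moreover have "Comp C (\<phi> ! 2) (T\<alpha> ! 1) = Comp C (\<alpha> ! 1) (\<phi> ! 1)"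
    using nseq_morphismD(2)[OF \<phi>(1), of 1] n_ge_3 by (simp add: numeral_2_eq_2)
  ultimately show ?thesis
    using T\<alpha> \<phi>(2) comp_Zero_right[OF _ A0] by simp
qed

lemma kernel_subset_image_first_maps:
  assumes s: "(A, \<alpha>) \<in> N" and h: "h \<in> Hom C B (A ! 1)"
    and h_ker: "Comp C (\<alpha> ! 1) h = Zero C B (A ! 2)"
  shows "h \<in> (\<lambda>k. Comp C (\<alpha> ! 0) k) ` Hom C B (A ! 0)"
proof -
  have \<alpha>0: "\<alpha> ! 0 \<in> Hom C (A ! 0) (A ! 1)" and \<alpha>1: "\<alpha> ! 1 \<in> Hom C (A ! 1) (A ! 2)"
    using N_first_maps[OF s] by blast+
  have B: "B \<in> Ob C" and A2: "A ! 2 \<in> Ob C"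
    using Hom_Ob[OF h] Hom_Ob[OF \<alpha>1] by blast+
  obtain TA T\<alpha> where T: "rot (trivial_nseq C So n B) = (TA, T\<alpha>)"
    by fastforce
  obtain SA S\<alpha> where S: "rot (A, \<alpha>) = (SA, S\<alpha>)"
    by fastforce
  have T_N: "(TA, T\<alpha>) \<in> N" and S_N: "(SA, S\<alpha>) \<in> N"
    using N1b N2star s B T S unfolding N1b_def N2star_def by metis+
  note TA = nth_rotated_trivial_nseq(1-3)[OF T] and T\<alpha> = nth_rotated_trivial_nseq(4,5)[OF T]
  note SA = nth_rotated_nseq(1-3)[OF N_length[OF s] S]
    and S\<alpha> = nth_rotated_nseq(4,5)[OF N_length[OF s] S]
  have "Comp C (Zero C (ZObj C) (A ! 2)) (T\<alpha> ! 0) = Comp C (S\<alpha> ! 0) h"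
    using T\<alpha> S\<alpha> h_ker comp_Zero_left[OF Zero_in_Hom[OF B ZObj_Ob] A2] by simp
  then obtain \<phi> where \<phi>: "nseq_morphism C Sm n (TA, T\<alpha>) (SA, S\<alpha>) \<phi>" "\<phi> ! 0 = h"
    using N3 T_N S_N h TA SA Zero_in_Hom[OF ZObj_Ob A2] unfolding N3_def by metis
  \<comment> \<open>The last square of \<open>\<phi>\<close> factors \<open>\<Sigma>h\<close> through \<open>\<Sigma>\<alpha>\<^sub>1\<close> via its last component.\<close>
  define p where "p = \<phi> ! (n - 1)"
  have p: "p \<in> Hom C (So B) (So (A ! 0))"
    using nseq_morphismD(1)[OF \<phi>(1), of "n - 1"] n_ge_3 TA SA unfolding p_def by simp
  have Sh: "Sm h \<in> Hom C (So B) (So (A ! 1))" and S\<alpha>0: "Sm (\<alpha> ! 0) \<in> Hom C (So (A ! 0)) (So (A ! 1))"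
    using Sm_Hom h \<alpha>0 by blast+
  have square: "Comp C (Sm h) (rotation_sign (Id C (So B))) = Comp C (rotation_sign (Sm (\<alpha> ! 0))) p"
    using nseq_morphismD(3)[OF \<phi>(1)] unfolding \<phi>(2) T\<alpha>(2) S\<alpha>(2) Sm_Id[OF B] p_def .
  have "Sm h = Comp C (Sm (\<alpha> ! 0)) p"
    using square comp_Id_right[OF Sh] comp_Neg_Id_cancel[OF Sh S\<alpha>0 p] by (cases "even n") simp_all
  then show ?thesis
    using factorization_of_Sm[OF \<alpha>0 h p] by blast
qed

lemma exact_pair_first_maps:
  assumes "s \<in> N"
  shows "exact_pair C (snd s ! 0) (snd s ! 1)"
proof -
  obtain A \<alpha> where s: "s = (A, \<alpha>)"
    by fastforce
  have \<alpha>0: "\<alpha> ! 0 \<in> Hom C (A ! 0) (A ! 1)" and \<alpha>1: "\<alpha> ! 1 \<in> Hom C (A ! 1) (A ! 2)"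
    using N_first_maps assms s by blast+
  have "exact_at C B (\<alpha> ! 0) (\<alpha> ! 1)" if B: "B \<in> Ob C" for B
  proof -
    have "Comp C (\<alpha> ! 1) (Comp C (\<alpha> ! 0) k) = Zero C B (A ! 2)" if "k \<in> Hom C B (A ! 0)" for k
      using comp_assoc[OF that \<alpha>0 \<alpha>1] comp_first_maps_Zero assms s comp_Zero_left[OF that]
        Hom_Ob[OF \<alpha>1] by simp
    then show ?thesis
      unfolding exact_at_Hom[OF \<alpha>0 \<alpha>1]
      using kernel_subset_image_first_maps assms s comp_in_Hom[OF _ \<alpha>0] by blast
  qed
  then show ?thesis
    unfolding exact_pair_def s using \<alpha>0 \<alpha>1 by auto
qed

theorem exact_nseq_N:
  assumes "s \<in> N"
  shows "exact_nseq C So Sm n s"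
proof -
  obtain A \<alpha> where s: "s = (A, \<alpha>)"
    by fastforce
  have rotated: "exact_pair C (\<alpha> ! j) (if j + 1 < n then \<alpha> ! (j + 1) else rotation_sign (Sm (\<alpha> ! 0)))"
    if "j < n" for j
    using exact_pair_first_maps[OF rotations_in_N[OF assms, of j]] first_maps_rotations[OF _ that]
      assms s by simp
  have S\<alpha>0: "Sm (\<alpha> ! 0) \<in> Hom C (So (A ! 0)) (So (A ! 1))"
    using Sm_Hom N_first_maps assms s by blast
  have last: "exact_pair C (\<alpha> ! (n - 1)) (Sm (\<alpha> ! 0))"
    using rotated[of "n - 1"] n_ge_3 exact_pair_Neg_right_iff[OF S\<alpha>0]
    by (cases "even n") auto
  have "\<alpha> ! 0 \<in> Mor C"
    using N_first_maps assms s unfolding Hom_def by blast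
  then have "exact_pair C (pow_m C Sm (i - 1) (\<alpha> ! (n - 1))) (pow_m C Sm i (\<alpha> ! 0))" for i
    using exact_pair_pow_m[OF last, of "i - 1"] pow_m_Sm[of "\<alpha> ! 0" "i - 1"] by simp
  moreover have "exact_pair C (pow_m C Sm i (\<alpha> ! (k - 1))) (pow_m C Sm i (\<alpha> ! k))"
    if "1 \<le> k" "k < n" for i k
    using exact_pair_pow_m rotated[of "k - 1"] that by simp
  ultimately show ?thesis
    unfolding exact_nseq_def s exact_pair_def by blast
qed

end

theorem lemma3p1:
  fixes C :: "('o, 'm) addcat" and So :: "'o \<Rightarrow> 'o" and Sm :: "'m \<Rightarrow> 'm"
    and n :: nat and N :: "('o, 'm) nseq set"
  assumes "additive_category C"
    and "automorphism C So Sm"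
    and "n \<ge> 3"
    and "\<forall>s \<in> N. is_nseq C So n s"
    and "N1b C So n N"
    and "N2star C So Sm n N"
    and "N3 C Sm n N"
    and "s \<in> N"
  shows "exact_nseq C So Sm n s"
proof -
  interpret nseq_axioms C So Sm n N
    using assms(1-7) by unfold_locales
  show ?thesis
    using exact_nseq_N[OF assms(8)] .
qed

end
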